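(* Let $l\in\mathbb{N}$ and let $(e^i_n)_{i=1,n\in\mathbb{N}}^l$ be a plegma spreading sequence in a Banach space such that, for each $1\le i\le l$, the sequence $(e^i_n)_n$ is unconditional. Then the whole family $(e^i_n)_{i=1,n\in\mathbb{N}}^l$ is an unconditional sequence.
   Context: For $k\in\mathbb{N}$, $[\mathbb{N}]^k$ denotes the $k$-element subsets of $\mathbb{N}$, each identified with its increasing enumeration $s(1)<\cdots<s(k)$. A plegma family in $[\mathbb{N}]^k$ is a finite sequence $(s_i)_{i=1}^l$ in $[\mathbb{N}]^k$ with (i) $s_{i_1}(j_1)<s_{i_2}(j_2)$ for all $1\le j_1<j_2\le k$ and all $1\le i_1,i_2\le l$, and (ii) $s_{i_1}(j)\le s_{i_2}(j)$ for all $1\le i_1<i_2\le l$ and $1\le j\le k$. For such $s=(s_i)_{i=1}^l$ and a vector $x=\sum_{(i,j)\in F}a_{ij}e^i_j$ with $F\subset\{1,\ldots,l\}\times\{1,\ldots,k\}$, the plegma shift of $x$ is $s(x)=\sum_{(i,j)\in F}a_{ij}e^i_{s_i(j)}$. A sequence $(e^i_n)_{i=1,n\in\mathbb{N}}^l$ in a Banach space is plegma spreading if each $(e^i_n)_n$ is a normalized Schauder basic sequence and, for every $x\in\mathrm{span}\{e^i_n\}$, $\|x\|=\|s(x)\|$ for every plegma shift $s(x)$ of $x$ (for every $k$ and every plegma family $s$ in $[\mathbb{N}]^k$ for which it is defined). *)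

theory Defs
  imports "HOL-Analysis.Analysis"
begin

text \<open>Indices are 0-based: rows i < l, columns n :: nat, positions j < k.\<close>

definition schauder_basic :: "(nat \<Rightarrow> 'a::real_normed_vector) \<Rightarrow> bool" where
  "schauder_basic f \<longleftrightarrow>
     (\<forall>x \<in> closure (span (range f)). \<exists>!a. (\<lambda>n. a n *\<^sub>R f n) sums x)"

definition unconditional_basic :: "(nat \<Rightarrow> 'a::real_normed_vector) \<Rightarrow> bool" where
  "unconditional_basic f \<longleftrightarrow> schauder_basic f \<and>
     (\<forall>a. summable (\<lambda>n. a n *\<^sub>R f n) \<longrightarrow> (\<lambda>n. a n *\<^sub>R f n) summable_on UNIV)"

text \<open>A plegma family (s_i)_{i<l} in [nat]^k, each s_i given by its increasing enumeration
  s i 0 < ... < s i (k-1).\<close>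
definition plegma_family :: "nat \<Rightarrow> nat \<Rightarrow> (nat \<Rightarrow> nat \<Rightarrow> nat) \<Rightarrow> bool" where
  "plegma_family l k s \<longleftrightarrow>
     (\<forall>i<l. strict_mono_on {..<k} (s i)) \<and>
     (\<forall>j1 j2 i1 i2. j1 < j2 \<and> j2 < k \<and> i1 < l \<and> i2 < l \<longrightarrow> s i1 j1 < s i2 j2) \<and>
     (\<forall>i1 i2 j. i1 < i2 \<and> i2 < l \<and> j < k \<longrightarrow> s i1 j \<le> s i2 j)"

definition plegma_spreading :: "nat \<Rightarrow> (nat \<Rightarrow> nat \<Rightarrow> 'a::real_normed_vector) \<Rightarrow> bool" where
  "plegma_spreading l e \<longleftrightarrow>
     (\<forall>i<l. (\<forall>n. norm (e i n) = 1) \<and> schauder_basic (e i)) \<and>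
     (\<forall>k s F a. plegma_family l k s \<and> F \<subseteq> {..<l} \<times> {..<k} \<longrightarrow>
        norm (\<Sum>(i,j)\<in>F. a i j *\<^sub>R e i j) = norm (\<Sum>(i,j)\<in>F. a i j *\<^sub>R e i (s i j)))"

definition unconditional_family :: "nat \<Rightarrow> (nat \<Rightarrow> nat \<Rightarrow> 'a::real_normed_vector) \<Rightarrow> bool" where
  "unconditional_family l e \<longleftrightarrow>
     (\<exists>\<sigma>. bij_betw \<sigma> (UNIV :: nat set) ({..<l} \<times> (UNIV :: nat set)) \<and>
          unconditional_basic (\<lambda>n. e (fst (\<sigma> n)) (snd (\<sigma> n))))"

end

theory Submission
  imports Defs
begin

text \<open>
  Each row n \<mapsto> e i n, being unconditional, has a suppression constant K: for finitely
  supported coefficients, dropping terms multiplies the norm by at most K.  The uniformity of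
  this bound comes from the Baire category theorem in the closed span of the row.
  The plegma spreading property then isolates one row i0 of a finite combination x: shifting
  x along the interlacing plegma j \<mapsto> (l + 1) j + i, and along the same plegma with row i0
  moved one place to the right, does not change the norm, and the difference of the two shifted
  vectors is a row-i0 vector with two disjoint supports.  Suppression bounds the row-i0 part
  of x by 2 K norm x, so the whole family has suppression constant l K (2 K) and, enumerated
  as n \<mapsto> (n mod l, n div l), is an unconditional basic sequence.
\<close>

section \<open>Unconditional convergence in Banach spaces\<close>

lemma summable_on_UNIV_iff_Cauchy:
  fixes f :: "'i \<Rightarrow> 'b::banach"
  shows "f summable_on UNIV \<longleftrightarrow>
    (\<forall>e>0. \<exists>F. finite F \<and> (\<forall>B. finite B \<and> B \<inter> F = {} \<longrightarrow> norm (sum f B) < e))"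
proof
  assume "f summable_on UNIV"
  then have lim: "(sum f \<longlongrightarrow> infsum f UNIV) (finite_subsets_at_top UNIV)"
    by (simp add: has_sum_def[symmetric])
  show "\<forall>e>0. \<exists>F. finite F \<and> (\<forall>B. finite B \<and> B \<inter> F = {} \<longrightarrow> norm (sum f B) < e)"
  proof (intro allI impI)
    fix e :: real assume "e > 0"
    then have "eventually (\<lambda>F. dist (sum f F) (infsum f UNIV) < e/2) (finite_subsets_at_top UNIV)"
      using lim by (intro tendstoD) auto
    then obtain X where X: "finite X" "\<And>Y. finite Y \<Longrightarrow> X \<subseteq> Y \<Longrightarrow> dist (sum f Y) (infsum f UNIV) < e/2"
      unfolding eventually_finite_subsets_at_top by auto
    have "norm (sum f B) < e" if "finite B" "B \<inter> X = {}" for B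
    proof -
      have "norm (sum f B) = dist (sum f (X \<union> B)) (sum f X)"
        using that X(1) by (simp add: sum.union_disjoint inf_commute dist_norm)
      also have "\<dots> \<le> dist (sum f (X \<union> B)) (infsum f UNIV) + dist (sum f X) (infsum f UNIV)"
        by (rule dist_triangle2)
      also have "\<dots> < e/2 + e/2" using X that by (intro add_strict_mono) auto
      finally show ?thesis by simp
    qed
    then show "\<exists>F. finite F \<and> (\<forall>B. finite B \<and> B \<inter> F = {} \<longrightarrow> norm (sum f B) < e)"
      using X(1) by blast
  qed
next
  assume small: "\<forall>e>0. \<exists>F. finite F \<and> (\<forall>B. finite B \<and> B \<inter> F = {} \<longrightarrow> norm (sum f B) < e)"
  have "cauchy_filter (filtermap (sum f) (finite_subsets_at_top UNIV))"
    unfolding cauchy_filter_metric_filtermap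
  proof (intro allI impI)
    fix e :: real assume "e > 0"
    then obtain F where F: "finite F" "\<And>B. finite B \<Longrightarrow> B \<inter> F = {} \<Longrightarrow> norm (sum f B) < e/2"
      using small[rule_format, of "e/2"] by auto
    have "dist (sum f F1) (sum f F2) < e" if "finite F1" "F \<subseteq> F1" "finite F2" "F \<subseteq> F2" for F1 F2
    proof -
      have "dist (sum f F1) (sum f F2) = norm (sum f (F1 - F2) - sum f (F2 - F1))"
        using that by (simp add: dist_norm sum_diff_split[symmetric] sum.Int_Diff[of F1 f F2]
            sum.Int_Diff[of F2 f F1] inf_commute)
      also have "\<dots> \<le> norm (sum f (F1 - F2)) + norm (sum f (F2 - F1))"
        by (rule norm_triangle_ineq4)
      also have "\<dots> < e/2 + e/2" using F that by (intro add_strict_mono) auto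
      finally show ?thesis by simp
    qed
    moreover have "eventually (\<lambda>F1. finite F1 \<and> F \<subseteq> F1) (finite_subsets_at_top UNIV)"
      unfolding eventually_finite_subsets_at_top using F(1) by blast
    ultimately show "\<exists>P. eventually P (finite_subsets_at_top UNIV) \<and>
        (\<forall>x y. P x \<and> P y \<longrightarrow> dist (sum f x) (sum f y) < e)"
      by blast
  qed
  then obtain L where "(sum f \<longlongrightarrow> L) (finite_subsets_at_top UNIV)"
    using complete_uniform[where S=UNIV] complete_UNIV by (force simp add: filterlim_def)
  then show "f summable_on UNIV"
    unfolding summable_on_def has_sum_def by blast
qed

lemma has_sum_diff:
  fixes f g :: "'i \<Rightarrow> 'b::topological_ab_group_add"
  assumes "(f has_sum a) A" "(g has_sum b) A"
  shows "((\<lambda>x. f x - g x) has_sum (a - b)) A"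
  using has_sum_add[OF assms(1), of "\<lambda>x. - g x" "- b"] assms(2) by (simp add: has_sum_uminus)

lemma has_sum_norm_le:
  fixes f :: "'i \<Rightarrow> 'b::real_normed_vector"
  assumes "(f has_sum a) A" "\<And>F. finite F \<Longrightarrow> F \<subseteq> A \<Longrightarrow> norm (sum f F) \<le> M"
  shows "norm a \<le> M"
proof -
  have "((\<lambda>F. norm (sum f F)) \<longlongrightarrow> norm a) (finite_subsets_at_top A)"
    using assms(1) unfolding has_sum_def by (rule tendsto_norm)
  moreover have "eventually (\<lambda>F. norm (sum f F) \<le> M) (finite_subsets_at_top A)"
    using assms(2) by (rule eventually_finite_subsets_at_top_weakI)
  ultimately show ?thesis
    by (rule tendsto_upperbound[OF _ _ finite_subsets_at_top_neq_bot])
qed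

lemma summable_geometric_dominated:
  fixes w :: "nat \<Rightarrow> 'a::banach"
  assumes "\<And>k. norm (w k) \<le> c / 2^k"
  shows "summable w" and "norm (suminf w) \<le> 2 * c"
proof -
  have geom: "(\<lambda>k. c / 2^k) sums (2 * c)"
    using sums_mult[OF geometric_sums[of "1/2::real"], of c] by (simp add: power_divide mult.commute)
  have norms: "summable (\<lambda>k. norm (w k))"
    using assms by (intro summable_comparison_test'[OF sums_summable[OF geom]]) simp
  then show "summable w" by (rule summable_norm_cancel)
  have "norm (suminf w) \<le> (\<Sum>k. norm (w k))" using norms by (rule summable_norm)
  also have "\<dots> \<le> 2 * c"
    using norms geom assms by (metis sums_unique suminf_le sums_summable)
  finally show "norm (suminf w) \<le> 2 * c" .
qed

section \<open>Expansions with bounded finite subsums\<close>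

lemma subspace_closure:
  fixes S :: "'a::real_normed_vector set"
  assumes "subspace S"
  shows "subspace (closure S)"
  unfolding subspace_def
proof (intro conjI ballI allI)
  show "0 \<in> closure S" using assms closure_subset subspace_0 by blast
next
  fix x y assume "x \<in> closure S" "y \<in> closure S"
  then obtain u v where "\<And>n. u n \<in> S" "u \<longlonglongrightarrow> x" "\<And>n. v n \<in> S" "v \<longlonglongrightarrow> y"
    unfolding closure_sequential by metis
  then show "x + y \<in> closure S"
    unfolding closure_sequential using assms
    by (intro exI[of _ "\<lambda>n. u n + v n"]) (auto intro: tendsto_add subspace_add)
next
  fix c :: real and x assume "x \<in> closure S"
  then obtain u where "\<And>n. u n \<in> S" "u \<longlonglongrightarrow> x"
    unfolding closure_sequential by metis
  then show "c *\<^sub>R x \<in> closure S"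
    unfolding closure_sequential using assms
    by (intro exI[of _ "\<lambda>n. c *\<^sub>R u n"]) (auto intro: tendsto_scaleR subspace_scale)
qed

abbreviation has_expansion :: "(nat \<Rightarrow> 'a::real_normed_vector) \<Rightarrow> (nat \<Rightarrow> real) \<Rightarrow> 'a \<Rightarrow> bool" where
  "has_expansion f a y \<equiv> ((\<lambda>n. a n *\<^sub>R f n) has_sum y) UNIV"

definition subsums_bounded :: "(nat \<Rightarrow> 'a::real_normed_vector) \<Rightarrow> (nat \<Rightarrow> real) \<Rightarrow> real \<Rightarrow> bool" where
  "subsums_bounded f a M \<longleftrightarrow> (\<forall>A. finite A \<longrightarrow> norm (\<Sum>n\<in>A. a n *\<^sub>R f n) \<le> M)"

lemma has_expansion_add:
  "has_expansion f a y \<Longrightarrow> has_expansion f b z \<Longrightarrow> has_expansion f (\<lambda>n. a n + b n) (y + z)"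
  by (simp add: scaleR_add_left has_sum_add)

lemma has_expansion_diff:
  "has_expansion f a y \<Longrightarrow> has_expansion f b z \<Longrightarrow> has_expansion f (\<lambda>n. a n - b n) (y - z)"
  by (simp add: scaleR_diff_left has_sum_diff)

lemma has_expansion_scale:
  "has_expansion f a y \<Longrightarrow> has_expansion f (\<lambda>n. c * a n) (c *\<^sub>R y)"
  using has_sum_scaleR[where c=c] by (fastforce simp: mult.commute)

lemma has_expansion_sum:
  fixes K :: nat
  assumes "\<And>k. k < K \<Longrightarrow> has_expansion f (b k) (w k)"
  shows "has_expansion f (\<lambda>n. \<Sum>k<K. b k n) (\<Sum>k<K. w k)"
  using assms
proof (induction K)
  case 0
  then show ?case by simp
next
  case (Suc K)
  then show ?case by (simp add: has_expansion_add)
qed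

lemma has_expansion_in_closure_span:
  assumes "has_expansion f a y"
  shows "y \<in> closure (span (range f))"
proof (rule Lim_in_closed_set[OF closed_closure _ finite_subsets_at_top_neq_bot])
  show "(sum (\<lambda>n. a n *\<^sub>R f n) \<longlongrightarrow> y) (finite_subsets_at_top UNIV)"
    using assms unfolding has_sum_def .
  show "eventually (\<lambda>F. (\<Sum>n\<in>F. a n *\<^sub>R f n) \<in> closure (span (range f))) (finite_subsets_at_top UNIV)"
    by (intro eventually_finite_subsets_at_top_weakI closure_subset[THEN subsetD]
        span_sum span_scale span_base) auto
qed

lemma has_expansion_subsums_bounded:
  fixes f :: "nat \<Rightarrow> 'a::banach"
  assumes "has_expansion f a y"
  shows "\<exists>M. subsums_bounded f a M"
proof -
  have "(\<lambda>n. a n *\<^sub>R f n) summable_on UNIV"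
    using assms by (rule has_sum_imp_summable)
  then obtain F where F: "finite F"
    "\<forall>B. finite B \<and> B \<inter> F = {} \<longrightarrow> norm (\<Sum>n\<in>B. a n *\<^sub>R f n) < 1"
    unfolding summable_on_UNIV_iff_Cauchy by (meson zero_less_one)
  have "norm (\<Sum>n\<in>A. a n *\<^sub>R f n) \<le> (\<Sum>n\<in>F. norm (a n *\<^sub>R f n)) + 1" if "finite A" for A
  proof -
    have "norm (\<Sum>n\<in>A. a n *\<^sub>R f n)
        \<le> norm (\<Sum>n\<in>A \<inter> F. a n *\<^sub>R f n) + norm (\<Sum>n\<in>A - F. a n *\<^sub>R f n)"
      unfolding sum.Int_Diff[OF that, of _ F] by (rule norm_triangle_ineq)
    moreover have "norm (\<Sum>n\<in>A \<inter> F. a n *\<^sub>R f n) \<le> (\<Sum>n\<in>F. norm (a n *\<^sub>R f n))"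
      using F(1) by (intro order_trans[OF norm_sum] sum_mono2) auto
    moreover have "norm (\<Sum>n\<in>A - F. a n *\<^sub>R f n) < 1" by (rule F(2)[rule_format]) (use that in auto)
    ultimately show ?thesis by linarith
  qed
  then show ?thesis unfolding subsums_bounded_def by blast
qed

lemma has_expansion_norm_le:
  assumes "has_expansion f a y" "subsums_bounded f a M"
  shows "norm y \<le> M"
  using has_sum_norm_le[OF assms(1)] assms(2) unfolding subsums_bounded_def by blast

lemma subsums_bounded_mono: "subsums_bounded f a M \<Longrightarrow> M \<le> N \<Longrightarrow> subsums_bounded f a N"
  unfolding subsums_bounded_def by (blast intro: order_trans)

lemma subsums_bounded_diff:
  assumes "subsums_bounded f a M" "subsums_bounded f b N"
  shows "subsums_bounded f (\<lambda>n. a n - b n) (M + N)"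
  unfolding subsums_bounded_def
proof (intro allI impI)
  fix A :: "nat set" assume "finite A"
  have "norm (\<Sum>n\<in>A. (a n - b n) *\<^sub>R f n)
      \<le> norm (\<Sum>n\<in>A. a n *\<^sub>R f n) + norm (\<Sum>n\<in>A. b n *\<^sub>R f n)"
    by (simp add: scaleR_diff_left sum_subtractf norm_triangle_ineq4)
  also have "\<dots> \<le> M + N"
    using assms \<open>finite A\<close> unfolding subsums_bounded_def by (intro add_mono) auto
  finally show "norm (\<Sum>n\<in>A. (a n - b n) *\<^sub>R f n) \<le> M + N" .
qed

lemma subsums_bounded_scale:
  assumes "subsums_bounded f a M"
  shows "subsums_bounded f (\<lambda>n. c * a n) (\<bar>c\<bar> * M)"
  using assms unfolding subsums_bounded_def
  by (simp add: scaleR_sum_right[symmetric] flip: scaleR_scaleR) (simp add: mult_left_mono)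

lemma subsums_bounded_coeff:
  assumes "subsums_bounded f a M"
  shows "\<bar>a n\<bar> * norm (f n) \<le> M"
  using assms[unfolded subsums_bounded_def, rule_format, of "{n}"] by simp

lemma schauder_basic_nonzero:
  assumes "schauder_basic f"
  shows "f n \<noteq> 0"
proof
  assume fn: "f n = 0"
  have "0 \<in> closure (span (range f))" by (simp add: closure_subset[THEN subsetD] span_zero)
  then obtain a0 where a0: "\<And>a. (\<lambda>m. a m *\<^sub>R f m) sums 0 \<Longrightarrow> a = a0"
    using assms unfolding schauder_basic_def by blast
  have "(\<lambda>m. (if m = n then 1 else 0) *\<^sub>R f m) = (\<lambda>_. 0)"
    using fn by auto
  then have "(\<lambda>m. if m = n then 1 else 0 :: real) = a0"
    by (intro a0) simp
  moreover have "(\<lambda>_. 0 :: real) = a0" by (intro a0) simp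
  ultimately have "(\<lambda>m. if m = n then 1 else 0 :: real) = (\<lambda>_. 0)" by simp
  then show False by (metis one_neq_zero)
qed

lemma schauder_basic_expansion_unique:
  assumes "schauder_basic f" "has_expansion f a y" "has_expansion f b y"
  shows "a = b"
proof -
  obtain c where "\<And>d. (\<lambda>n. d n *\<^sub>R f n) sums y \<Longrightarrow> d = c"
    using assms(1) has_expansion_in_closure_span[OF assms(2)] unfolding schauder_basic_def by blast
  then show ?thesis using assms(2,3) has_sum_imp_sums by metis
qed

lemma unconditional_basic_expansion_exists:
  assumes "unconditional_basic f" "y \<in> closure (span (range f))"
  shows "\<exists>a. has_expansion f a y"
proof -
  obtain a where a: "(\<lambda>n. a n *\<^sub>R f n) sums y"
    using assms unfolding unconditional_basic_def schauder_basic_def by blast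
  then have "(\<lambda>n. a n *\<^sub>R f n) summable_on UNIV"
    using assms(1) sums_summable unfolding unconditional_basic_def by blast
  then have "has_expansion f a (infsum (\<lambda>n. a n *\<^sub>R f n) UNIV)" by simp
  moreover from this have "infsum (\<lambda>n. a n *\<^sub>R f n) UNIV = y"
    using a has_sum_imp_sums sums_unique2 by blast
  ultimately show ?thesis by auto
qed

lemma subsums_bounded_series_tail:
  fixes f :: "nat \<Rightarrow> 'a::banach"
  assumes nonzero: "\<And>n. f n \<noteq> 0"
    and bnd: "\<And>k. subsums_bounded f (b k) (B / 2^k)"
  shows "subsums_bounded f (\<lambda>n. (\<Sum>k. b k n) - (\<Sum>k<K. b k n)) (2 * (B / 2^K))"
proof -
  have summable: "summable (\<lambda>k. b k n)" for n
  proof (rule summable_geometric_dominated(1))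
    fix k
    show "norm (b k n) \<le> (B / norm (f n)) / 2^k"
      using subsums_bounded_coeff[OF bnd[of k], of n] nonzero[of n]
      by (simp add: field_simps)
  qed
  define W where "W A k = (\<Sum>n\<in>A. b k n *\<^sub>R f n)" for A k
  have W_le: "norm (W A k) \<le> B / 2^k" if "finite A" for A k
    using bnd[of k] that unfolding W_def subsums_bounded_def by blast
  show "subsums_bounded f (\<lambda>n. (\<Sum>k. b k n) - (\<Sum>k<K. b k n)) (2 * (B / 2^K))"
    unfolding subsums_bounded_def
  proof (intro allI impI)
    fix A :: "nat set" assume A: "finite A"
    have "(\<Sum>n\<in>A. ((\<Sum>k. b k n) - (\<Sum>k<K. b k n)) *\<^sub>R f n) = (\<Sum>j. W A (j + K))"
    proof -
      have "(\<Sum>n\<in>A. (\<Sum>k. b k n) *\<^sub>R f n) = (\<Sum>k. W A k)"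
        unfolding W_def using summable
        by (simp add: suminf_scaleR_left suminf_sum summable_scaleR_left)
      moreover have "(\<Sum>n\<in>A. (\<Sum>k<K. b k n) *\<^sub>R f n) = (\<Sum>k<K. W A k)"
        unfolding W_def by (simp add: scaleR_sum_left sum.swap[of _ A])
      moreover have "summable (W A)"
        using W_le[OF A] by (rule summable_geometric_dominated(1))
      ultimately show ?thesis
        by (simp add: scaleR_diff_left sum_subtractf suminf_minus_initial_segment)
    qed
    also have "norm \<dots> \<le> 2 * (B / 2^K)"
    proof (rule summable_geometric_dominated(2))
      fix j
      show "norm (W A (j + K)) \<le> (B / 2^K) / 2^j"
        using W_le[OF A, of "j + K"] by (simp add: power_add field_simps)
    qed
    finally show "norm (\<Sum>n\<in>A. ((\<Sum>k. b k n) - (\<Sum>k<K. b k n)) *\<^sub>R f n) \<le> 2 * (B / 2^K)" .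
  qed
qed

lemma has_expansion_of_subsums_approx:
  fixes f :: "nat \<Rightarrow> 'a::banach"
  assumes exp: "\<And>K. has_expansion f (c K) (z K)"
    and approx: "\<And>K. subsums_bounded f (\<lambda>n. a n - c K n) (\<epsilon> K)" and "\<epsilon> \<longlonglongrightarrow> 0"
  shows "\<exists>y. has_expansion f a y \<and> z \<longlonglongrightarrow> y"
proof -
  have small: "eventually (\<lambda>K. \<epsilon> K < e) sequentially" if "e > 0" for e
    using \<open>\<epsilon> \<longlonglongrightarrow> 0\<close> that by (rule order_tendstoD(2))
  have "(\<lambda>n. a n *\<^sub>R f n) summable_on UNIV"
    unfolding summable_on_UNIV_iff_Cauchy
  proof (intro allI impI)
    fix e :: real assume "e > 0"
    then obtain K where K: "\<epsilon> K < e / 2"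
      using small[of "e/2"] unfolding eventually_sequentially by auto
    have "(\<lambda>n. c K n *\<^sub>R f n) summable_on UNIV"
      using exp by (rule has_sum_imp_summable)
    then obtain F where F: "finite F"
      "\<forall>B. finite B \<and> B \<inter> F = {} \<longrightarrow> norm (\<Sum>n\<in>B. c K n *\<^sub>R f n) < e / 2"
      unfolding summable_on_UNIV_iff_Cauchy by (meson \<open>e > 0\<close> half_gt_zero)
    have "norm (\<Sum>n\<in>B. a n *\<^sub>R f n) < e" if "finite B" "B \<inter> F = {}" for B
    proof -
      have "norm (\<Sum>n\<in>B. a n *\<^sub>R f n)
          \<le> norm (\<Sum>n\<in>B. c K n *\<^sub>R f n) + norm (\<Sum>n\<in>B. (a n - c K n) *\<^sub>R f n)"
        by (simp add: scaleR_diff_left sum_subtractf norm_triangle_sub)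
      moreover have "norm (\<Sum>n\<in>B. (a n - c K n) *\<^sub>R f n) \<le> \<epsilon> K"
        using approx[of K] that(1) unfolding subsums_bounded_def by blast
      ultimately show ?thesis using F(2) that K by fastforce
    qed
    then show "\<exists>F. finite F \<and> (\<forall>B. finite B \<and> B \<inter> F = {} \<longrightarrow> norm (\<Sum>n\<in>B. a n *\<^sub>R f n) < e)"
      using F(1) by blast
  qed
  then obtain y where y: "has_expansion f a y" by (auto simp: summable_on_def)
  have "z \<longlonglongrightarrow> y"
  proof (rule tendstoI)
    fix e :: real assume "e > 0"
    have le: "dist (z K) y \<le> \<epsilon> K" for K
      using has_expansion_norm_le[OF has_expansion_diff[OF y exp] approx]
      by (simp add: dist_norm norm_minus_commute)
    show "eventually (\<lambda>K. dist (z K) y < e) sequentially"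
      by (rule eventually_mono[OF small[OF \<open>e > 0\<close>]]) (rule le_less_trans[OF le])
  qed
  with y show ?thesis by blast
qed

lemma has_expansion_series:
  fixes f :: "nat \<Rightarrow> 'a::banach"
  assumes nonzero: "\<And>n. f n \<noteq> 0"
    and exp: "\<And>k. has_expansion f (b k) (w k)"
    and bnd: "\<And>k. subsums_bounded f (b k) (B / 2^k)"
  shows "has_expansion f (\<lambda>n. \<Sum>k. b k n) (\<Sum>k. w k)"
    and "subsums_bounded f (\<lambda>n. \<Sum>k. b k n) (2 * B)"
proof -
  have tail: "subsums_bounded f (\<lambda>n. (\<Sum>k. b k n) - (\<Sum>k<K. b k n)) (2 * (B / 2^K))" for K
    using nonzero bnd by (rule subsums_bounded_series_tail)
  have partial: "has_expansion f (\<lambda>n. \<Sum>k<K. b k n) (\<Sum>k<K. w k)" for K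
    using exp by (rule has_expansion_sum)
  have lim: "(\<lambda>K. 2 * (B / 2^K)) \<longlonglongrightarrow> 0"
    using LIMSEQ_divide_realpow_zero[of 2 "2 * B"] by simp
  obtain y where "has_expansion f (\<lambda>n. \<Sum>k. b k n) y" "(\<lambda>K. \<Sum>k<K. w k) \<longlonglongrightarrow> y"
    using has_expansion_of_subsums_approx[where \<epsilon>="\<lambda>K. 2 * (B / 2^K)", OF partial tail lim] by blast
  then show "has_expansion f (\<lambda>n. \<Sum>k. b k n) (\<Sum>k. w k)"
    by (simp add: sums_def sums_unique[symmetric])
  show "subsums_bounded f (\<lambda>n. \<Sum>k. b k n) (2 * B)"
    using tail[of 0] by simp
qed

definition bounded_expansions :: "(nat \<Rightarrow> 'a::real_normed_vector) \<Rightarrow> real \<Rightarrow> 'a set" where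
  "bounded_expansions f N = {z. \<exists>a. has_expansion f a z \<and> subsums_bounded f a N}"

lemma zero_in_bounded_expansions: "N \<ge> 0 \<Longrightarrow> 0 \<in> bounded_expansions f N"
  unfolding bounded_expansions_def subsums_bounded_def by (intro CollectI exI[of _ "\<lambda>_. 0"]) simp

lemma bounded_expansions_mono: "N \<le> N' \<Longrightarrow> bounded_expansions f N \<subseteq> bounded_expansions f N'"
  unfolding bounded_expansions_def by (auto intro: subsums_bounded_mono)

lemma closure_bounded_expansions_diff:
  assumes "x \<in> closure (bounded_expansions f N)" "y \<in> closure (bounded_expansions f N')"
  shows "x - y \<in> closure (bounded_expansions f (N + N'))"
proof -
  obtain u v where u: "\<And>n. u n \<in> bounded_expansions f N" "u \<longlonglongrightarrow> x"
    and v: "\<And>n. v n \<in> bounded_expansions f N'" "v \<longlonglongrightarrow> y"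
    using assms unfolding closure_sequential by metis
  have "u n - v n \<in> bounded_expansions f (N + N')" for n
    using u(1)[of n] v(1)[of n] unfolding bounded_expansions_def
    by (auto intro: has_expansion_diff subsums_bounded_diff)
  then show ?thesis
    unfolding closure_sequential using u(2) v(2) by (intro exI[of _ "\<lambda>n. u n - v n"]) (auto intro: tendsto_diff)
qed

lemma closure_bounded_expansions_scale:
  assumes "x \<in> closure (bounded_expansions f N)"
  shows "c *\<^sub>R x \<in> closure (bounded_expansions f (\<bar>c\<bar> * N))"
proof -
  obtain u where u: "\<And>n. u n \<in> bounded_expansions f N" "u \<longlonglongrightarrow> x"
    using assms unfolding closure_sequential by metis
  have "c *\<^sub>R u n \<in> bounded_expansions f (\<bar>c\<bar> * N)" for n
    using u(1)[of n] unfolding bounded_expansions_def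
    by (auto intro: has_expansion_scale subsums_bounded_scale)
  then show ?thesis
    unfolding closure_sequential using u(2) by (intro exI[of _ "\<lambda>n. c *\<^sub>R u n"]) (auto intro: tendsto_scaleR)
qed

lemma unconditional_basic_closure_span_eq:
  fixes f :: "nat \<Rightarrow> 'a::banach"
  assumes "unconditional_basic f"
  shows "closure (span (range f)) = (\<Union>m::nat. closure (bounded_expansions f m))"
proof
  show "closure (span (range f)) \<subseteq> (\<Union>m::nat. closure (bounded_expansions f m))"
  proof
    fix y assume "y \<in> closure (span (range f))"
    then obtain a where a: "has_expansion f a y"
      using unconditional_basic_expansion_exists[OF assms] by blast
    then obtain M where "subsums_bounded f a M"
      using has_expansion_subsums_bounded by blast
    moreover obtain m :: nat where "M \<le> m" using real_arch_simple by blast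
    ultimately have "y \<in> bounded_expansions f m"
      using a unfolding bounded_expansions_def by (blast intro: subsums_bounded_mono)
    then show "y \<in> (\<Union>m::nat. closure (bounded_expansions f m))" using closure_subset by blast
  qed
  show "(\<Union>m::nat. closure (bounded_expansions f m)) \<subseteq> closure (span (range f))"
    using has_expansion_in_closure_span unfolding bounded_expansions_def
    by (intro UN_least closure_minimal) auto
qed

lemma unconditional_basic_bounded_expansions_interior:
  fixes f :: "nat \<Rightarrow> 'a::banach"
  assumes "unconditional_basic f"
  obtains m :: nat and y0 r where "r > 0" "y0 \<in> closure (span (range f))"
    "ball y0 r \<inter> closure (span (range f)) \<subseteq> closure (bounded_expansions f m)"
proof -
  define Y where "Y = closure (span (range f))"
  define E where "E m = closure (bounded_expansions f (real m))" for m
  have Y_eq: "Y = \<Union>(range E)"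
    unfolding Y_def E_def by (rule unconditional_basic_closure_span_eq[OF assms])
  have "\<exists>m. top_of_set Y interior_of E m \<noteq> {}"
  proof (rule ccontr)
    assume "\<not> (\<exists>m. top_of_set Y interior_of E m \<noteq> {})"
    moreover have "closedin (top_of_set Y) (E m)" for m
      using Y_eq by (intro closed_subset) (auto simp: E_def)
    moreover have "completely_metrizable_space (top_of_set Y)"
      unfolding Y_def
      by (intro completely_metrizable_space_closedin completely_metrizable_space_euclidean)
        (simp_all add: closed_closedin[symmetric])
    ultimately have "top_of_set Y interior_of Y = {}"
      using Baire_category_alt[of "top_of_set Y" "range E"] Y_eq by auto
    moreover have "0 \<in> Y" unfolding Y_def by (simp add: closure_subset[THEN subsetD] span_zero)
    ultimately show False
      using interior_of_topspace[of "top_of_set Y"] by simp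
  qed
  then obtain m y0 where y0: "y0 \<in> top_of_set Y interior_of E m" by blast
  moreover have "openin (top_of_set Y) (top_of_set Y interior_of E m)" by simp
  ultimately obtain r where "r > 0" "ball y0 r \<inter> Y \<subseteq> top_of_set Y interior_of E m"
    unfolding openin_contains_ball by blast
  moreover have "y0 \<in> Y"
    using y0 interior_of_subset[of "top_of_set Y" "E m"] Y_eq by auto
  ultimately show thesis
    using that[of r y0 m] interior_of_subset[of "top_of_set Y" "E m"] unfolding Y_def E_def by auto
qed

lemma unconditional_basic_approximations:
  fixes f :: "nat \<Rightarrow> 'a::banach"
  assumes "unconditional_basic f"
  shows "\<exists>M>0. \<forall>y\<in>closure (span (range f)). y \<in> closure (bounded_expansions f (M * norm y))"
proof -
  define Y where "Y = closure (span (range f))"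
  have "subspace Y" unfolding Y_def by (intro subspace_closure subspace_span)
  obtain m :: nat and y0 r where r: "r > 0" "y0 \<in> Y" "ball y0 r \<inter> Y \<subseteq> closure (bounded_expansions f m)"
    using unconditional_basic_bounded_expansions_interior[OF assms] unfolding Y_def by metis
  have small: "y \<in> closure (bounded_expansions f (2 * real m))" if "y \<in> Y" "norm y < r" for y
  proof -
    have "y0 + y \<in> closure (bounded_expansions f m)" "y0 \<in> closure (bounded_expansions f m)"
      using r that \<open>subspace Y\<close> by (auto simp: dist_norm intro: subspace_add)
    then have "(y0 + y) - y0 \<in> closure (bounded_expansions f (real m + real m))"
      by (rule closure_bounded_expansions_diff)
    then show ?thesis by simp
  qed
  define M where "M = 4 * m / r"
  have "y \<in> closure (bounded_expansions f ((M + 1) * norm y))" if "y \<in> Y" for y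
  proof (cases "y = 0")
    case True
    then show ?thesis using closure_subset zero_in_bounded_expansions by auto
  next
    case False
    define t where "t = r / (2 * norm y)"
    have t: "t > 0" "norm (t *\<^sub>R y) < r"
      using False r by (auto simp: t_def)
    have "(1 / t) *\<^sub>R (t *\<^sub>R y) \<in> closure (bounded_expansions f (\<bar>1 / t\<bar> * (2 * real m)))"
      using small[OF subspace_scale[OF \<open>subspace Y\<close> that] t(2)]
      by (rule closure_bounded_expansions_scale)
    moreover have "\<bar>1 / t\<bar> * (2 * real m) \<le> (M + 1) * norm y"
      using False r unfolding t_def M_def by (simp add: field_simps)
    ultimately show ?thesis
      using t(1) closure_mono[OF bounded_expansions_mono] by fastforce
  qed
  moreover have "M + 1 > 0" using r(1) unfolding M_def by (simp add: add_nonneg_pos)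
  ultimately show ?thesis unfolding Y_def by blast
qed

lemma closure_bounded_expansions_halving:
  assumes "x \<in> closure (bounded_expansions f (M * norm x))"
  shows "\<exists>a z. has_expansion f a z \<and> subsums_bounded f a (M * norm x) \<and> norm (x - z) \<le> norm x / 2"
proof (cases "x = 0")
  case True
  then show ?thesis
    using zero_in_bounded_expansions[of 0 f] unfolding bounded_expansions_def by auto
next
  case False
  then have "norm x / 2 > 0" by simp
  then obtain z where z: "z \<in> bounded_expansions f (M * norm x)" "dist z x < norm x / 2"
    using assms unfolding closure_approachable by blast
  have "norm (x - z) \<le> norm x / 2" using z(2) by (simp add: dist_commute dist_norm)
  then show ?thesis using z(1) unfolding bounded_expansions_def by blast
qed

lemma halving_residues_sums:
  fixes Z :: "'a::real_normed_vector \<Rightarrow> 'a"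
  assumes "subspace Y" "y \<in> Y" and Z: "\<And>x. x \<in> Y \<Longrightarrow> Z x \<in> Y"
    and half: "\<And>x. x \<in> Y \<Longrightarrow> norm (x - Z x) \<le> norm x / 2"
  defines "r \<equiv> rec_nat y (\<lambda>_ x. x - Z x)"
  shows "r k \<in> Y" and "norm (r k) \<le> norm y / 2^k" and "(\<lambda>k. Z (r k)) sums y"
proof -
  have r_simps: "r 0 = y" "r (Suc k) = r k - Z (r k)" for k
    by (simp_all add: r_def)
  have r: "r k \<in> Y \<and> norm (r k) \<le> norm y / 2^k" for k
  proof (induction k)
    case 0
    then show ?case using \<open>y \<in> Y\<close> by (simp add: r_simps)
  next
    case (Suc k)
    then show ?case
      using Z[of "r k"] half[of "r k"] \<open>subspace Y\<close> by (simp add: r_simps subspace_diff)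
  qed
  then show "r k \<in> Y" "norm (r k) \<le> norm y / 2^k" by simp_all
  have partial_sums: "(\<Sum>k<K. Z (r k)) = y - r K" for K
    by (induction K) (simp_all add: r_simps)
  have "r \<longlonglongrightarrow> 0"
  proof (rule Lim_null_comparison)
    show "eventually (\<lambda>k. norm (r k) \<le> norm y / 2^k) sequentially" using r by simp
    show "(\<lambda>k. norm y / 2^k) \<longlonglongrightarrow> 0" by (rule LIMSEQ_divide_realpow_zero) simp
  qed
  then have "(\<lambda>K. y - r K) \<longlonglongrightarrow> y - 0" by (intro tendsto_diff tendsto_const)
  then show "(\<lambda>k. Z (r k)) sums y" unfolding sums_def partial_sums by simp
qed

text \<open>Approximation up to half the norm, iterated on the residues, as in the open mapping theorem.\<close>

lemma bounded_expansions_of_approximations: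
  fixes f :: "nat \<Rightarrow> 'a::banach"
  assumes nonzero: "\<And>n. f n \<noteq> 0" and "M \<ge> 0"
    and approx: "\<And>x. x \<in> closure (span (range f)) \<Longrightarrow> x \<in> closure (bounded_expansions f (M * norm x))"
    and y: "y \<in> closure (span (range f))"
  shows "y \<in> bounded_expansions f (2 * (M * norm y))"
proof -
  define Y where "Y = closure (span (range f))"
  have "\<exists>a z. has_expansion f a z \<and> subsums_bounded f a (M * norm x) \<and> norm (x - z) \<le> norm x / 2"
    if "x \<in> Y" for x
    using approx[OF that[unfolded Y_def]] by (rule closure_bounded_expansions_halving)
  then obtain A Z where AZ: "\<And>x. x \<in> Y \<Longrightarrow> has_expansion f (A x) (Z x)"
    "\<And>x. x \<in> Y \<Longrightarrow> subsums_bounded f (A x) (M * norm x)"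
    "\<And>x. x \<in> Y \<Longrightarrow> norm (x - Z x) \<le> norm x / 2"
    by metis
  define r where "r = rec_nat y (\<lambda>_ x. x - Z x)"
  have "subspace Y" unfolding Y_def by (intro subspace_closure subspace_span)
  have "y \<in> Y" "\<And>x. x \<in> Y \<Longrightarrow> Z x \<in> Y"
    using y AZ(1) has_expansion_in_closure_span unfolding Y_def by blast+
  note residues = halving_residues_sums[OF \<open>subspace Y\<close> this AZ(3), folded r_def]
  have bnd: "subsums_bounded f (A (r k)) (M * norm y / 2^k)" for k
  proof (rule subsums_bounded_mono[OF AZ(2)[OF residues(1)]])
    show "M * norm (r k) \<le> M * norm y / 2^k"
      using mult_left_mono[OF residues(2) \<open>M \<ge> 0\<close>] by simp
  qed
  have "has_expansion f (A (r k)) (Z (r k))" for k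
    using AZ(1) residues(1) by blast
  from has_expansion_series[OF nonzero this bnd] sums_unique[OF residues(3)] show ?thesis
    unfolding bounded_expansions_def by auto
qed

section \<open>Suppression constants\<close>

definition suppression_bounded_on :: "'i set \<Rightarrow> ('i \<Rightarrow> 'a::real_normed_vector) \<Rightarrow> real \<Rightarrow> bool" where
  "suppression_bounded_on I f K \<longleftrightarrow> (\<forall>S A d. finite S \<longrightarrow> S \<subseteq> I \<longrightarrow> A \<subseteq> S \<longrightarrow>
      norm (\<Sum>n\<in>A. d n *\<^sub>R f n) \<le> K * norm (\<Sum>n\<in>S. d n *\<^sub>R f n))"

lemma suppression_bounded_onD:
  assumes "suppression_bounded_on I f K" "finite S" "S \<subseteq> I" "A \<subseteq> S"
  shows "norm (\<Sum>n\<in>A. d n *\<^sub>R f n) \<le> K * norm (\<Sum>n\<in>S. d n *\<^sub>R f n)"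
  using assms unfolding suppression_bounded_on_def by blast

lemma suppression_bounded_on_coeff:
  assumes "suppression_bounded_on I f K" "finite S" "S \<subseteq> I" "m \<in> S"
  shows "\<bar>d m\<bar> * norm (f m) \<le> K * norm (\<Sum>n\<in>S. d n *\<^sub>R f n)"
  using suppression_bounded_onD[OF assms(1-3), of "{m}" d] assms(4) by simp

lemma suppression_bounded_on_mono:
  assumes "suppression_bounded_on I f K" "K \<le> K'"
  shows "suppression_bounded_on I f K'"
  using assms unfolding suppression_bounded_on_def by (meson mult_right_mono norm_ge_zero order_trans)

lemma suppression_bounded_on_reindex:
  assumes "bij_betw \<sigma> UNIV I" "suppression_bounded_on I f K"
  shows "suppression_bounded_on UNIV (f \<circ> \<sigma>) K"
  unfolding suppression_bounded_on_def
proof (intro allI impI)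
  fix S A :: "'a set" and d :: "'a \<Rightarrow> real" assume "finite S" "S \<subseteq> UNIV" "A \<subseteq> S"
  have inj: "inj \<sigma>" using assms(1) by (rule bij_betw_imp_inj_on)
  define d' where "d' = d \<circ> inv \<sigma>"
  have reindex: "(\<Sum>n\<in>B. d n *\<^sub>R (f \<circ> \<sigma>) n) = (\<Sum>p\<in>\<sigma> ` B. d' p *\<^sub>R f p)" for B
    using inj by (simp add: sum.reindex inj_on_subset[OF inj] d'_def)
  have "\<sigma> ` S \<subseteq> I" using assms(1) bij_betw_imp_surj_on by blast
  then show "norm (\<Sum>n\<in>A. d n *\<^sub>R (f \<circ> \<sigma>) n) \<le> K * norm (\<Sum>n\<in>S. d n *\<^sub>R (f \<circ> \<sigma>) n)"
    unfolding reindex using \<open>finite S\<close> \<open>A \<subseteq> S\<close>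
    by (intro suppression_bounded_onD[OF assms(2)]) auto
qed

theorem unconditional_basic_suppression_bounded:
  fixes f :: "nat \<Rightarrow> 'a::banach"
  assumes "unconditional_basic f"
  shows "\<exists>K\<ge>0. suppression_bounded_on UNIV f K"
proof -
  have schauder: "schauder_basic f" using assms unfolding unconditional_basic_def by blast
  obtain M where "M > 0"
    and approx: "\<And>y. y \<in> closure (span (range f)) \<Longrightarrow> y \<in> closure (bounded_expansions f (M * norm y))"
    using unconditional_basic_approximations[OF assms] by blast
  have "norm (\<Sum>n\<in>A. d n *\<^sub>R f n) \<le> 2 * M * norm (\<Sum>n\<in>S. d n *\<^sub>R f n)"
    if "finite S" "A \<subseteq> S" for S A d
  proof -
    define b where "b n = (if n \<in> S then d n else 0)" for n
    define y where "y = (\<Sum>n\<in>S. d n *\<^sub>R f n)"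
    have b: "has_expansion f b y"
      unfolding y_def using \<open>finite S\<close>
      by (intro has_sum_finite_neutralI) (auto simp: b_def)
    obtain a where a: "has_expansion f a y" "subsums_bounded f a (2 * (M * norm y))"
      using bounded_expansions_of_approximations[OF schauder_basic_nonzero[OF schauder] _ approx
          has_expansion_in_closure_span[OF \<open>has_expansion f b y\<close>]] \<open>M > 0\<close>
      unfolding bounded_expansions_def by auto
    moreover have "a = b" using schauder_basic_expansion_unique[OF schauder a(1)] b .
    ultimately have "subsums_bounded f b (2 * M * norm y)" by (simp add: mult.assoc)
    moreover have "(\<Sum>n\<in>A. b n *\<^sub>R f n) = (\<Sum>n\<in>A. d n *\<^sub>R f n)"
      using \<open>A \<subseteq> S\<close> unfolding b_def by (intro sum.cong) auto
    ultimately show ?thesis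
      using finite_subset[OF that(2,1)] unfolding subsums_bounded_def y_def by metis
  qed
  then show ?thesis
    using \<open>M > 0\<close> unfolding suppression_bounded_on_def by (intro exI[of _ "2 * M"]) auto
qed

lemma suppression_bounded_sums_unique:
  assumes nonzero: "\<And>n. g n \<noteq> 0" and supp: "suppression_bounded_on UNIV g C"
    and "(\<lambda>n. a n *\<^sub>R g n) sums x" "(\<lambda>n. b n *\<^sub>R g n) sums x"
  shows "a = b"
proof
  fix m
  have "(\<lambda>n. (a n - b n) *\<^sub>R g n) sums 0"
    using sums_diff[OF assms(3,4)] by (simp add: scaleR_diff_left)
  then have "(\<lambda>N. C * norm (\<Sum>n<N. (a n - b n) *\<^sub>R g n)) \<longlonglongrightarrow> C * norm (0::'a)"
    unfolding sums_def by (intro tendsto_intros)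
  moreover have "\<forall>N\<ge>Suc m. \<bar>a m - b m\<bar> * norm (g m) \<le> C * norm (\<Sum>n<N. (a n - b n) *\<^sub>R g n)"
    by (auto intro: suppression_bounded_on_coeff[OF supp])
  ultimately have "\<bar>a m - b m\<bar> * norm (g m) \<le> 0"
    by (intro LIMSEQ_le_const) auto
  then show "a m = b m" using nonzero[of m] by (simp add: mult_le_0_iff)
qed

lemma suppression_bounded_summable_on:
  fixes g :: "nat \<Rightarrow> 'a::banach"
  assumes "C \<ge> 0" and supp: "suppression_bounded_on UNIV g C"
    and "summable (\<lambda>n. a n *\<^sub>R g n)"
  shows "(\<lambda>n. a n *\<^sub>R g n) summable_on UNIV"
  unfolding summable_on_UNIV_iff_Cauchy
proof (intro allI impI)
  fix e :: real assume "e > 0"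
  then have "e / (C + 1) > 0" using \<open>C \<ge> 0\<close> by simp
  then obtain N where N: "\<And>m n. m \<ge> N \<Longrightarrow> norm (\<Sum>k\<in>{m..<n}. a k *\<^sub>R g k) < e / (C + 1)"
    using assms(3) unfolding summable_Cauchy by blast
  have "norm (\<Sum>n\<in>B. a n *\<^sub>R g n) < e" if "finite B" "B \<inter> {..<N} = {}" for B
  proof -
    have "B \<subseteq> {N..<Suc (Max (insert N B))}"
      using that by (auto simp: le_imp_less_Suc)
    then have "norm (\<Sum>n\<in>B. a n *\<^sub>R g n) \<le> C * norm (\<Sum>n\<in>{N..<Suc (Max (insert N B))}. a n *\<^sub>R g n)"
      by (intro suppression_bounded_onD[OF supp]) auto
    also have "\<dots> \<le> C * (e / (C + 1))"
      by (intro mult_left_mono less_imp_le[OF N]) (simp_all add: \<open>C \<ge> 0\<close>)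
    also have "\<dots> < e" using \<open>C \<ge> 0\<close> \<open>e > 0\<close> by (simp add: field_simps)
    finally show ?thesis .
  qed
  then show "\<exists>F. finite F \<and> (\<forall>B. finite B \<and> B \<inter> F = {} \<longrightarrow> norm (\<Sum>n\<in>B. a n *\<^sub>R g n) < e)"
    by (intro exI[of _ "{..<N}"]) auto
qed

lemma Cauchy_dominated:
  fixes u :: "nat \<Rightarrow> 'a::metric_space" and v :: "nat \<Rightarrow> 'b::metric_space"
  assumes "Cauchy v" and "L \<ge> 0" and dom: "\<And>k k'. dist (u k) (u k') \<le> L * dist (v k) (v k')"
  shows "Cauchy u"
  unfolding Cauchy_def
proof (intro allI impI)
  fix e :: real assume "e > 0"
  then obtain M where M: "\<forall>m\<ge>M. \<forall>n\<ge>M. dist (v m) (v n) < e / (L + 1)"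
    using assms(1,2) unfolding Cauchy_def by (meson add_nonneg_pos divide_pos_pos zero_less_one)
  have "dist (u m) (u n) < e" if "m \<ge> M" "n \<ge> M" for m n
  proof -
    have "dist (u m) (u n) \<le> L * (e / (L + 1))"
      using dom[of m n] M that \<open>L \<ge> 0\<close> by (meson less_imp_le mult_left_mono order_trans)
    also have "\<dots> < e" using \<open>e > 0\<close> \<open>L \<ge> 0\<close> by (simp add: field_simps)
    finally show ?thesis .
  qed
  then show "\<exists>M. \<forall>m\<ge>M. \<forall>n\<ge>M. dist (u m) (u n) < e" by blast
qed

lemma span_range_eq_partial_sums:
  fixes g :: "nat \<Rightarrow> 'a::real_vector"
  assumes "y \<in> span (range g)"
  shows "\<exists>c N. \<forall>M\<ge>N. y = (\<Sum>n<M. c n *\<^sub>R g n)"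
  using assms
proof (induction rule: span_induct_alt)
  case base
  show ?case by (intro exI[of _ "\<lambda>_. 0"]) simp
next
  case (step t x y)
  then obtain m c N where m: "x = g m" and c: "\<forall>M\<ge>N. y = (\<Sum>n<M. c n *\<^sub>R g n)" by blast
  have sum_eq: "\<forall>M\<ge>max N (Suc m). t *\<^sub>R x + y = (\<Sum>n<M. (c n + (if n = m then t else 0)) *\<^sub>R g n)"
    using c m by (simp add: scaleR_add_left sum.distrib if_distrib[of "\<lambda>t. t *\<^sub>R _"] cong: if_cong)
  show ?case
    by (rule exI[of _ "\<lambda>n. c n + (if n = m then t else 0)"], rule exI, rule sum_eq)
qed

lemma suppression_bounded_subsum_le:
  fixes g :: "nat \<Rightarrow> 'a::real_normed_vector"
  assumes supp: "suppression_bounded_on UNIV g C"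
    and y: "\<forall>M\<ge>N. y = (\<Sum>n<M. c n *\<^sub>R g n)" and "finite A"
  shows "norm (\<Sum>n\<in>A. c n *\<^sub>R g n) \<le> C * norm y"
proof -
  obtain k where "A \<subseteq> {..<k}"
    using finite_nat_bounded[OF \<open>finite A\<close>] by blast
  then have "norm (\<Sum>n\<in>A. c n *\<^sub>R g n) \<le> C * norm (\<Sum>n<max N k. c n *\<^sub>R g n)"
    by (intro suppression_bounded_onD[OF supp]) auto
  then show ?thesis using y[rule_format, of "max N k"] by simp
qed

lemma suppression_bounded_sums_exist:
  fixes g :: "nat \<Rightarrow> 'a::banach"
  assumes nonzero: "\<And>n. g n \<noteq> 0" and "C \<ge> 0" and supp: "suppression_bounded_on UNIV g C"
    and x: "x \<in> closure (span (range g))"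
  shows "\<exists>a. (\<lambda>n. a n *\<^sub>R g n) sums x"
proof -
  obtain y where y: "\<And>k. y k \<in> span (range g)" "y \<longlonglongrightarrow> x"
    using x closure_sequential by blast
  obtain c N where yN: "\<And>k. \<forall>M\<ge>N k. y k = (\<Sum>n<M. c k n *\<^sub>R g n)"
    using span_range_eq_partial_sums[OF y(1)] by metis
  have "\<forall>M\<ge>max (N k) (N k'). y k - y k' = (\<Sum>n<M. (c k n - c k' n) *\<^sub>R g n)" for k k'
    using yN[of k] yN[of k'] by (auto simp: scaleR_diff_left sum_subtractf)
  then have diff_le: "norm (\<Sum>n\<in>A. (c k n - c k' n) *\<^sub>R g n) \<le> C * norm (y k - y k')"
    if "finite A" for k k' A
    using that by (rule suppression_bounded_subsum_le[OF supp])
  have "Cauchy (\<lambda>k. c k m)" for m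
  proof (rule Cauchy_dominated[OF LIMSEQ_imp_Cauchy[OF y(2)]])
    show "C / norm (g m) \<ge> 0" using \<open>C \<ge> 0\<close> by simp
    fix k k'
    have "\<bar>c k m - c k' m\<bar> * norm (g m) \<le> C * dist (y k) (y k')"
      using diff_le[of "{m}" k k'] by (simp add: dist_norm flip: scaleR_diff_left)
    then show "dist (c k m) (c k' m) \<le> C / norm (g m) * dist (y k) (y k')"
      using nonzero[of m] by (simp add: dist_real_def field_simps)
  qed
  then obtain a where a: "\<And>m. (\<lambda>k. c k m) \<longlonglongrightarrow> a m"
    unfolding Cauchy_convergent_iff convergent_def by metis
  have approx: "norm ((\<Sum>n<M. a n *\<^sub>R g n) - x) \<le> (C + 1) * norm (x - y k)" if "M \<ge> N k" for k M
  proof -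
    have "(\<lambda>k'. norm ((\<Sum>n<M. c k' n *\<^sub>R g n) - y k)) \<longlonglongrightarrow> norm ((\<Sum>n<M. a n *\<^sub>R g n) - y k)"
      by (intro tendsto_intros a)
    moreover have "(\<lambda>k'. C * norm (y k' - y k)) \<longlonglongrightarrow> C * norm (x - y k)"
      by (intro tendsto_intros y(2))
    moreover have "norm ((\<Sum>n<M. c k' n *\<^sub>R g n) - y k) \<le> C * norm (y k' - y k)" for k'
      using diff_le[of "{..<M}" k' k] yN[of k] that by (simp add: scaleR_diff_left sum_subtractf)
    ultimately have "norm ((\<Sum>n<M. a n *\<^sub>R g n) - y k) \<le> C * norm (x - y k)"
      by (intro LIMSEQ_le) auto
    then show ?thesis
      using norm_triangle_ineq[of "(\<Sum>n<M. a n *\<^sub>R g n) - y k" "y k - x"]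
      by (simp add: norm_minus_commute algebra_simps)
  qed
  have "(\<lambda>M. \<Sum>n<M. a n *\<^sub>R g n) \<longlonglongrightarrow> x"
  proof (rule LIMSEQ_I)
    fix r :: real assume "r > 0"
    have "(\<lambda>k. (C + 1) * norm (x - y k)) \<longlonglongrightarrow> (C + 1) * norm (x - x)"
      by (intro tendsto_intros y(2))
    then obtain k where "(C + 1) * norm (x - y k) < r"
      using \<open>r > 0\<close> order_tendstoD(2)[of _ 0 sequentially r] unfolding eventually_sequentially by auto
    then show "\<exists>no. \<forall>M\<ge>no. norm ((\<Sum>n<M. a n *\<^sub>R g n) - x) < r"
      using approx by (meson le_less_trans)
  qed
  then show ?thesis unfolding sums_def by blast
qed

theorem suppression_bounded_imp_unconditional_basic:
  fixes g :: "nat \<Rightarrow> 'a::banach"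
  assumes "\<And>n. g n \<noteq> 0" and "C \<ge> 0" and "suppression_bounded_on UNIV g C"
  shows "unconditional_basic g"
  unfolding unconditional_basic_def schauder_basic_def
  using suppression_bounded_sums_exist[OF assms] suppression_bounded_sums_unique[OF assms(1,3)]
    suppression_bounded_summable_on[OF assms(2,3)] by blast

section \<open>Plegma spreading families\<close>

lemma plegma_spreadingD:
  assumes "plegma_spreading l e" "plegma_family l k s" "F \<subseteq> {..<l} \<times> {..<k}"
  shows "norm (\<Sum>(i,j)\<in>F. a i j *\<^sub>R e i j) = norm (\<Sum>(i,j)\<in>F. a i j *\<^sub>R e i (s i j))"
  using assms unfolding plegma_spreading_def by blast

lemma plegma_family_interlaced:
  assumes "\<And>i. i < l \<Longrightarrow> t i \<le> l" and "\<And>i1 i2. i1 < i2 \<Longrightarrow> i2 < l \<Longrightarrow> t i1 \<le> t i2"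
  shows "plegma_family l k (\<lambda>i j. (l + 1) * j + t i)"
proof -
  have less: "(l + 1) * j1 + t i1 < (l + 1) * j2 + t i2" if "j1 < j2" "i1 < l" for i1 i2 j1 j2
  proof -
    have "(l + 1) * j1 + t i1 < (l + 1) * (j1 + 1)" using assms(1)[OF that(2)] by simp
    also have "\<dots> \<le> (l + 1) * j2" using that(1) by (intro mult_left_mono) auto
    finally show ?thesis by simp
  qed
  show ?thesis
    unfolding plegma_family_def
  proof (intro conjI allI impI)
    show "strict_mono_on {..<k} (\<lambda>j. (l + 1) * j + t i)" if "i < l" for i
      by (rule strict_mono_onI) (rule less[OF _ that])
    show "(l + 1) * j1 + t i1 < (l + 1) * j2 + t i2" if "j1 < j2 \<and> j2 < k \<and> i1 < l \<and> i2 < l"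
      for j1 j2 i1 i2
      using less that by blast
    show "(l + 1) * j + t i1 \<le> (l + 1) * j + t i2" if "i1 < i2 \<and> i2 < l \<and> j < k" for i1 i2 j
      using assms(2) that by simp
  qed
qed

lemma suppression_bounded_sum_le_diff:
  fixes f :: "nat \<Rightarrow> 'a::real_normed_vector"
  assumes supp: "suppression_bounded_on UNIV f K"
    and "finite J" "inj_on p J" "inj_on q J" "p ` J \<inter> q ` J = {}"
  shows "norm (\<Sum>j\<in>J. c j *\<^sub>R f (p j)) \<le> K * norm (\<Sum>j\<in>J. c j *\<^sub>R (f (p j) - f (q j)))"
proof -
  define d where "d n = (if n \<in> p ` J then c (inv_into J p n) else - c (inv_into J q n))" for n
  have sum_p: "(\<Sum>n\<in>p ` J. d n *\<^sub>R f n) = (\<Sum>j\<in>J. c j *\<^sub>R f (p j))"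
    using assms(3) by (simp add: sum.reindex d_def)
  have "q j \<notin> p ` J" if "j \<in> J" for j using assms(5) that by blast
  then have "(\<Sum>n\<in>q ` J. d n *\<^sub>R f n) = (\<Sum>j\<in>J. - (c j *\<^sub>R f (q j)))"
    using assms(4) by (simp add: sum.reindex d_def)
  then have "(\<Sum>n\<in>p ` J \<union> q ` J. d n *\<^sub>R f n) = (\<Sum>j\<in>J. c j *\<^sub>R (f (p j) - f (q j)))"
    using assms(2,5) sum_p
    by (simp add: sum.union_disjoint scaleR_diff_right sum_subtractf sum_negf)
  then show ?thesis
    using suppression_bounded_onD[OF supp, of "p ` J \<union> q ` J" "p ` J" d] assms(2) sum_p by simp
qed

lemma finite_row: "finite F \<Longrightarrow> finite {j. (i, j) \<in> F}"
  using finite_Image[of F "{i}"] by (simp add: Image_def)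

lemma sum_Sigma_rows:
  fixes l :: nat
  assumes "finite F" "F \<subseteq> {..<l} \<times> UNIV"
  shows "(\<Sum>(i,j)\<in>F. g i j) = (\<Sum>i<l. \<Sum>j\<in>{j. (i, j) \<in> F}. g i j)"
proof -
  have "F = Sigma {..<l} (\<lambda>i. {j. (i, j) \<in> F})" using assms(2) by auto
  then have "(\<Sum>(i,j)\<in>F. g i j) = (\<Sum>(i,j)\<in>Sigma {..<l} (\<lambda>i. {j. (i, j) \<in> F}). g i j)"
    by (rule arg_cong)
  also have "\<dots> = (\<Sum>i<l. \<Sum>j\<in>{j. (i, j) \<in> F}. g i j)"
    using finite_row[OF assms(1)] by (intro sum.Sigma[symmetric]) auto
  finally show ?thesis .
qed

lemma sum_diff_single_row:
  fixes e :: "nat \<Rightarrow> nat \<Rightarrow> 'a::real_vector"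
  assumes "finite F" "F \<subseteq> {..<l} \<times> UNIV" "i0 < l" "\<And>i j. i \<noteq> i0 \<Longrightarrow> s i j = s' i j"
  shows "(\<Sum>(i,j)\<in>F. c i j *\<^sub>R e i (s i j)) - (\<Sum>(i,j)\<in>F. c i j *\<^sub>R e i (s' i j))
    = (\<Sum>j\<in>{j. (i0, j) \<in> F}. c i0 j *\<^sub>R (e i0 (s i0 j) - e i0 (s' i0 j)))"
proof -
  have "(\<Sum>(i,j)\<in>F. c i j *\<^sub>R e i (s i j)) - (\<Sum>(i,j)\<in>F. c i j *\<^sub>R e i (s' i j))
      = (\<Sum>(i,j)\<in>F. c i j *\<^sub>R (e i (s i j) - e i (s' i j)))"
    by (simp add: scaleR_diff_right sum_subtractf case_prod_unfold)
  also have "\<dots> = (\<Sum>i<l. \<Sum>j\<in>{j. (i, j) \<in> F}. c i j *\<^sub>R (e i (s i j) - e i (s' i j)))"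
    using assms(1,2) by (rule sum_Sigma_rows)
  also have "\<dots> = (\<Sum>j\<in>{j. (i0, j) \<in> F}. c i0 j *\<^sub>R (e i0 (s i0 j) - e i0 (s' i0 j)))"
    using assms(3,4) by (subst sum.mono_neutral_right[of "{..<l}" "{i0}"]) auto
  finally show ?thesis .
qed

lemma mult_add_eq_iff_of_less:
  fixes m i i' j j' :: nat
  assumes "i < m" "i' < m"
  shows "m * j + i = m * j' + i' \<longleftrightarrow> j = j' \<and> i = i'"
proof
  have "(m * j + i) div m = j" "(m * j + i) mod m = i" "(m * j' + i') div m = j'" "(m * j' + i') mod m = i'"
    using assms by simp_all
  then show "m * j + i = m * j' + i' \<Longrightarrow> j = j' \<and> i = i'" by metis
qed simp

lemma plegma_spreading_shifted_row_le:
  fixes e :: "nat \<Rightarrow> nat \<Rightarrow> 'a::real_normed_vector"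
  assumes spreading: "plegma_spreading l e" and "i0 < l"
    and supp: "suppression_bounded_on UNIV (e i0) K" and "K \<ge> 0"
    and "finite F" and F: "F \<subseteq> {..<l} \<times> UNIV"
  shows "norm (\<Sum>j\<in>{j. (i0, j) \<in> F}. c i0 j *\<^sub>R e i0 ((l + 1) * j + i0))
    \<le> 2 * K * norm (\<Sum>(i,j)\<in>F. c i j *\<^sub>R e i j)"
proof -
  obtain k where "snd ` F \<subseteq> {..<k}"
    using finite_nat_bounded[OF finite_imageI[OF \<open>finite F\<close>]] by blast
  then have Fk: "F \<subseteq> {..<l} \<times> {..<k}" using F by force
  define J where "J = {j. (i0, j) \<in> F}"
  define p where "p j = (l + 1) * j + i0" for j
  define x where "x = (\<Sum>(i,j)\<in>F. c i j *\<^sub>R e i j)"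
  define xa where "xa = (\<Sum>(i,j)\<in>F. c i j *\<^sub>R e i ((l + 1) * j + i))"
  \<comment> \<open>the same shift with row i0 moved one place to the right: only row i0 survives in xa - xb\<close>
  define xb where "xb = (\<Sum>(i,j)\<in>F. c i j *\<^sub>R e i ((l + 1) * j + (if i = i0 then i + 1 else i)))"
  have "plegma_family l k (\<lambda>i j. (l + 1) * j + i)"
    by (rule plegma_family_interlaced) auto
  from plegma_spreadingD[OF spreading this Fk] have "norm xa = norm x"
    unfolding x_def xa_def by simp
  have "plegma_family l k (\<lambda>i j. (l + 1) * j + (if i = i0 then i + 1 else i))"
    by (rule plegma_family_interlaced) (use \<open>i0 < l\<close> in auto)
  from plegma_spreadingD[OF spreading this Fk] have "norm xb = norm x"
    unfolding x_def xb_def by simp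
  with \<open>norm xa = norm x\<close> have norm_diff: "norm (xa - xb) \<le> 2 * norm x"
    using norm_triangle_ineq4[of xa xb] by simp
  have diff_eq: "xa - xb = (\<Sum>j\<in>J. c i0 j *\<^sub>R (e i0 (p j) - e i0 (p j + 1)))"
    unfolding xa_def xb_def J_def p_def
    by (subst sum_diff_single_row[OF \<open>finite F\<close> F \<open>i0 < l\<close>]) (simp_all add: add.assoc)
  have "finite J" unfolding J_def using \<open>finite F\<close> by (rule finite_row)
  moreover have "inj_on p J" "inj_on (\<lambda>j. p j + 1) J" "p ` J \<inter> (\<lambda>j. p j + 1) ` J = {}"
    using mult_add_eq_iff_of_less[of i0 "l + 1" i0] mult_add_eq_iff_of_less[of i0 "l + 1" "i0 + 1"]
      \<open>i0 < l\<close> unfolding p_def by (auto intro!: inj_onI)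
  ultimately have "norm (\<Sum>j\<in>J. c i0 j *\<^sub>R e i0 (p j)) \<le> K * norm (xa - xb)"
    unfolding diff_eq by (rule suppression_bounded_sum_le_diff[OF supp])
  also have "\<dots> \<le> K * (2 * norm x)"
    using norm_diff \<open>K \<ge> 0\<close> by (rule mult_left_mono)
  finally show ?thesis unfolding J_def p_def x_def by simp
qed

lemma plegma_spreading_row_le:
  fixes e :: "nat \<Rightarrow> nat \<Rightarrow> 'a::real_normed_vector"
  assumes spreading: "plegma_spreading l e" and "i0 < l"
    and "suppression_bounded_on UNIV (e i0) K" and "K \<ge> 0"
    and "finite F" and F: "F \<subseteq> {..<l} \<times> UNIV"
  shows "norm (\<Sum>j\<in>{j. (i0, j) \<in> F}. c i0 j *\<^sub>R e i0 j) \<le> 2 * K * norm (\<Sum>(i,j)\<in>F. c i j *\<^sub>R e i j)"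
proof -
  define J where "J = {j. (i0, j) \<in> F}"
  obtain k where "J \<subseteq> {..<k}"
    using finite_nat_bounded finite_row[OF \<open>finite F\<close>] unfolding J_def by blast
  then have "Pair i0 ` J \<subseteq> {..<l} \<times> {..<k}" using \<open>i0 < l\<close> by auto
  moreover have "plegma_family l k (\<lambda>i j. (l + 1) * j + i)"
    by (rule plegma_family_interlaced) auto
  ultimately have "norm (\<Sum>j\<in>J. c i0 j *\<^sub>R e i0 j) = norm (\<Sum>j\<in>J. c i0 j *\<^sub>R e i0 ((l + 1) * j + i0))"
    using plegma_spreadingD[OF spreading, of k _ "Pair i0 ` J" c] by (simp add: sum.reindex inj_on_def)
  then show ?thesis
    using plegma_spreading_shifted_row_le[OF assms] unfolding J_def by simp
qed

lemma plegma_spreading_suppression_bounded: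
  fixes e :: "nat \<Rightarrow> nat \<Rightarrow> 'a::real_normed_vector"
  assumes spreading: "plegma_spreading l e" and "K \<ge> 0"
    and rows: "\<And>i. i < l \<Longrightarrow> suppression_bounded_on UNIV (e i) K"
  shows "suppression_bounded_on ({..<l} \<times> UNIV) (\<lambda>(i, j). e i j) (real l * (K * (2 * K)))"
  unfolding suppression_bounded_on_def
proof (intro allI impI)
  fix S A :: "(nat \<times> nat) set" and d :: "nat \<times> nat \<Rightarrow> real"
  assume S: "finite S" "S \<subseteq> {..<l} \<times> UNIV" and "A \<subseteq> S"
  define x where "x = (\<Sum>(i,j)\<in>S. d (i, j) *\<^sub>R e i j)"
  have A: "finite A" "A \<subseteq> {..<l} \<times> UNIV" using S \<open>A \<subseteq> S\<close> finite_subset by auto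
  have "norm (\<Sum>p\<in>A. d p *\<^sub>R (case p of (i, j) \<Rightarrow> e i j))
      = norm (\<Sum>i<l. \<Sum>j\<in>{j. (i, j) \<in> A}. d (i, j) *\<^sub>R e i j)"
    using sum_Sigma_rows[OF A, of "\<lambda>i j. d (i, j) *\<^sub>R e i j"] by (simp add: case_prod_unfold)
  also have "\<dots> \<le> (\<Sum>i<l. norm (\<Sum>j\<in>{j. (i, j) \<in> A}. d (i, j) *\<^sub>R e i j))"
    by (rule norm_sum)
  also have "\<dots> \<le> (\<Sum>i<l. K * (2 * K * norm x))"
  proof (rule sum_mono)
    fix i assume "i \<in> {..<l}"
    then have "norm (\<Sum>j\<in>{j. (i, j) \<in> A}. d (i, j) *\<^sub>R e i j)
        \<le> K * norm (\<Sum>j\<in>{j. (i, j) \<in> S}. d (i, j) *\<^sub>R e i j)"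
      using \<open>A \<subseteq> S\<close> finite_row[OF S(1)]
      by (intro suppression_bounded_onD[OF rows]) auto
    also have "\<dots> \<le> K * (2 * K * norm x)"
      using plegma_spreading_row_le[OF spreading _ rows \<open>K \<ge> 0\<close> S, of i "\<lambda>i j. d (i, j)"]
        \<open>i \<in> {..<l}\<close> \<open>K \<ge> 0\<close> unfolding x_def by (intro mult_left_mono) auto
    finally show "norm (\<Sum>j\<in>{j. (i, j) \<in> A}. d (i, j) *\<^sub>R e i j) \<le> K * (2 * K * norm x)" .
  qed
  also have "\<dots> = real l * (K * (2 * K)) * norm (\<Sum>p\<in>S. d p *\<^sub>R (case p of (i, j) \<Rightarrow> e i j))"
    unfolding x_def by (simp add: case_prod_unfold)
  finally show "norm (\<Sum>p\<in>A. d p *\<^sub>R (case p of (i, j) \<Rightarrow> e i j))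
      \<le> real l * (K * (2 * K)) * norm (\<Sum>p\<in>S. d p *\<^sub>R (case p of (i, j) \<Rightarrow> e i j))" .
qed

lemma bij_betw_mod_div:
  fixes l :: nat
  assumes "l > 0"
  shows "bij_betw (\<lambda>n. (n mod l, n div l)) UNIV ({..<l} \<times> UNIV)"
  by (rule bij_betw_byWitness[where f'="\<lambda>(i, j). j * l + i"]) (use assms in auto)

theorem theorem2p16:
  fixes l :: nat and e :: "nat \<Rightarrow> nat \<Rightarrow> 'a::banach"
  assumes "l \<ge> 1"
    and "plegma_spreading l e"
    and "\<And>i. i < l \<Longrightarrow> unconditional_basic (e i)"
  shows "unconditional_family l e"
proof -
  obtain Ki where Ki: "\<And>i. i < l \<Longrightarrow> Ki i \<ge> 0 \<and> suppression_bounded_on UNIV (e i) (Ki i)"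
    using unconditional_basic_suppression_bounded[OF assms(3)] by metis
  define K where "K = (\<Sum>i<l. Ki i)"
  have "K \<ge> 0" unfolding K_def using Ki by (intro sum_nonneg) auto
  have rows: "suppression_bounded_on UNIV (e i) K" if "i < l" for i
  proof (rule suppression_bounded_on_mono)
    show "suppression_bounded_on UNIV (e i) (Ki i)" using Ki that by blast
    show "Ki i \<le> K" unfolding K_def using Ki that by (intro member_le_sum) auto
  qed
  define \<sigma> where "\<sigma> n = (n mod l, n div l)" for n
  have \<sigma>: "bij_betw \<sigma> UNIV ({..<l} \<times> UNIV)"
    unfolding \<sigma>_def using assms(1) by (intro bij_betw_mod_div) simp
  have "suppression_bounded_on ({..<l} \<times> UNIV) (\<lambda>(i, j). e i j) (real l * (K * (2 * K)))"
    using plegma_spreading_suppression_bounded[OF assms(2) \<open>K \<ge> 0\<close>] rows by blast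
  then have "suppression_bounded_on UNIV (\<lambda>n. e (fst (\<sigma> n)) (snd (\<sigma> n))) (real l * (K * (2 * K)))"
    using suppression_bounded_on_reindex[OF \<sigma>] by (simp add: comp_def case_prod_unfold)
  moreover have "e (fst (\<sigma> n)) (snd (\<sigma> n)) \<noteq> 0" for n
  proof -
    have "norm (e (n mod l) (n div l)) = 1"
      using assms(1,2) unfolding plegma_spreading_def by simp
    then show ?thesis unfolding \<sigma>_def by auto
  qed
  ultimately have "unconditional_basic (\<lambda>n. e (fst (\<sigma> n)) (snd (\<sigma> n)))"
    using \<open>K \<ge> 0\<close> by (intro suppression_bounded_imp_unconditional_basic) auto
  then show ?thesis unfolding unconditional_family_def using \<sigma> by blast
qed

end
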